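(* Let $G$ be a countably infinite graph and let $h:\mathbb{N}\to\mathbb{N}$. Then $h$ is online computable from the isomorphism type of $G$ if and only if $h$ is primitive recursive.
   Context: A presentation of $G$ is a graph with vertex set $\mathbb{N}$ isomorphic to $G$. For a presentation $\alpha$ and $m\in\mathbb{N}$, let $\alpha\upharpoonright m$ denote the finite string coding the induced subgraph of $\alpha$ on the vertices $\{0,\dots,m-1\}$ (listing, for each vertex, its adjacencies with the earlier vertices). A function $h:\mathbb{N}\to\mathbb{N}$ is online computable from the isomorphism type of $G$ if there are primitive recursive functions $u:\mathbb{N}\to\mathbb{N}$ (the use) and $F$ such that for every presentation $\alpha$ of $G$ and every $i$, $h(i)=F(\alpha\upharpoonright u(i), i)$. (Equivalently, $h$ is computed from every presentation $\alpha$ by a single primitive recursive functional with oracle $\alpha$; by the robustness lemma such a functional has a primitive recursive use, since the space of presentations is primitively recursively branching.) *)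

theory Defs
  imports Main "HOL-Library.Countable_Set"
begin

primrec prim_rec_op ::
  "(nat list \<Rightarrow> nat) \<Rightarrow> (nat list \<Rightarrow> nat) \<Rightarrow> nat \<Rightarrow> nat list \<Rightarrow> nat" where
  "prim_rec_op g h 0 ys = g ys"
| "prim_rec_op g h (Suc x) ys = h (x # prim_rec_op g h x ys # ys)"

text \<open>PR n f: f, restricted to argument lists of length n, is primitive recursive.\<close>
inductive PR :: "nat \<Rightarrow> (nat list \<Rightarrow> nat) \<Rightarrow> bool" where
  PR_zero: "PR n (\<lambda>xs. 0)"
| PR_succ: "PR 1 (\<lambda>xs. Suc (hd xs))"
| PR_proj: "i < n \<Longrightarrow> PR n (\<lambda>xs. xs ! i)"
| PR_comp: "PR m g \<Longrightarrow> length gs = m \<Longrightarrow> (\<forall>f \<in> set gs. PR n f)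
            \<Longrightarrow> PR n (\<lambda>xs. g (map (\<lambda>f. f xs) gs))"
| PR_rec: "PR n g \<Longrightarrow> PR (Suc (Suc n)) h
            \<Longrightarrow> PR (Suc n) (\<lambda>xs. prim_rec_op g h (hd xs) (tl xs))"

definition prim_rec1 :: "(nat \<Rightarrow> nat) \<Rightarrow> bool" where
  "prim_rec1 h \<longleftrightarrow> (\<exists>f. PR 1 f \<and> (\<forall>x. h x = f [x]))"

definition prim_rec2 :: "(nat \<Rightarrow> nat \<Rightarrow> nat) \<Rightarrow> bool" where
  "prim_rec2 F \<longleftrightarrow> (\<exists>f. PR 2 f \<and> (\<forall>x y. F x y = f [x, y]))"

definition is_graph :: "'a set \<Rightarrow> ('a \<Rightarrow> 'a \<Rightarrow> bool) \<Rightarrow> bool" where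
  "is_graph V E \<longleftrightarrow> (\<forall>x\<in>V. \<forall>y\<in>V. E x y \<longleftrightarrow> E y x) \<and> (\<forall>x\<in>V. \<not> E x x)"

definition presentation :: "(nat \<Rightarrow> nat \<Rightarrow> bool) \<Rightarrow> 'a set \<Rightarrow> ('a \<Rightarrow> 'a \<Rightarrow> bool) \<Rightarrow> bool" where
  "presentation \<alpha> V E \<longleftrightarrow> is_graph UNIV \<alpha> \<and>
     (\<exists>f. bij_betw f UNIV V \<and> (\<forall>i j. \<alpha> i j \<longleftrightarrow> E (f i) (f j)))"

definition restr_string :: "(nat \<Rightarrow> nat \<Rightarrow> bool) \<Rightarrow> nat \<Rightarrow> bool list" where
  "restr_string \<alpha> m = concat (map (\<lambda>i. map (\<lambda>j. \<alpha> i j) [0..<i]) [0..<m])"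

text \<open>Standard injective coding of binary strings as natural numbers (binary with a
  leading 1 marker).\<close>
definition code_string :: "bool list \<Rightarrow> nat" where
  "code_string bs = foldr (\<lambda>b n. 2 * n + (if b then 1 else 0)) bs 1"

definition online_computable ::
  "'a set \<Rightarrow> ('a \<Rightarrow> 'a \<Rightarrow> bool) \<Rightarrow> (nat \<Rightarrow> nat) \<Rightarrow> bool" where
  "online_computable V E h \<longleftrightarrow>
     (\<exists>u F. prim_rec1 u \<and> prim_rec2 F \<and>
        (\<forall>\<alpha>. presentation \<alpha> V E \<longrightarrow>
           (\<forall>i. h i = F (code_string (restr_string \<alpha> (u i))) i)))"

end

theory Submission
  imports Defs "HOL-Library.Ramsey"
begin

text \<open>A primitive recursive function is computed online by ignoring the presentation. Conversely,
  by Ramsey's theorem an infinite graph has an infinite clique or an infinite independent set;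
  listing any \<open>m\<close> of its vertices first and the remaining vertices afterwards yields a
  presentation whose first \<open>m\<close> vertices induce the complete or the empty graph. Hence, for a
  suitable fixed bit \<open>b\<close>, the string read by the online procedure at input \<open>i\<close> can be taken
  to be the constant string of \<open>b\<close>'s of length \<open>\<Sum>k<u i. k\<close>, so \<open>h\<close> is a primitive recursive
  expression in \<open>i\<close>.\<close>

lemma PR_compose1: "PR 1 g \<Longrightarrow> PR n f \<Longrightarrow> PR n (\<lambda>xs. g [f xs])"
  using PR_comp[of 1 g "[f]" n] by simp

lemma PR_compose2: "PR 2 g \<Longrightarrow> PR n f1 \<Longrightarrow> PR n f2 \<Longrightarrow> PR n (\<lambda>xs. g [f1 xs, f2 xs])"
  using PR_comp[of 2 g "[f1, f2]" n] by (simp add: numeral_2_eq_2)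

lemma PR_const: "PR n (\<lambda>_. c)"
proof (induction c)
  case 0
  show ?case by (rule PR_zero)
next
  case (Suc c)
  from PR_compose1[OF PR_succ Suc] show ?case by simp
qed

lemma prim_rec1_const: "prim_rec1 (\<lambda>_. c)"
  unfolding prim_rec1_def using PR_const by blast

lemma prim_rec1_id: "prim_rec1 (\<lambda>x. x)"
  unfolding prim_rec1_def using PR_proj[of 0 1] by force

lemma prim_rec1_compose:
  assumes "prim_rec1 f" "prim_rec1 g"
  shows "prim_rec1 (\<lambda>x. f (g x))"
proof -
  obtain F G where "PR 1 F" "\<forall>x. f x = F [x]" "PR 1 G" "\<forall>x. g x = G [x]"
    using assms unfolding prim_rec1_def by blast
  then show ?thesis
    unfolding prim_rec1_def by (intro exI[of _ "\<lambda>xs. F [G xs]"]) (simp add: PR_compose1)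
qed

lemma prim_rec1_compose2:
  assumes "prim_rec2 G" "prim_rec1 a" "prim_rec1 b"
  shows "prim_rec1 (\<lambda>x. G (a x) (b x))"
proof -
  obtain g fa fb where "PR 2 g" "\<forall>x y. G x y = g [x, y]"
    and "PR 1 fa" "\<forall>x. a x = fa [x]" and "PR 1 fb" "\<forall>x. b x = fb [x]"
    using assms unfolding prim_rec1_def prim_rec2_def by blast
  then show ?thesis
    unfolding prim_rec1_def by (intro exI[of _ "\<lambda>xs. g [fa xs, fb xs]"]) (simp add: PR_compose2)
qed

lemma prim_rec2_compose:
  assumes "prim_rec2 G" "prim_rec2 a" "prim_rec2 b"
  shows "prim_rec2 (\<lambda>x y. G (a x y) (b x y))"
proof -
  obtain g fa fb where "PR 2 g" "\<forall>x y. G x y = g [x, y]"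
    and "PR 2 fa" "\<forall>x y. a x y = fa [x, y]" and "PR 2 fb" "\<forall>x y. b x y = fb [x, y]"
    using assms unfolding prim_rec2_def by blast
  then show ?thesis
    unfolding prim_rec2_def by (intro exI[of _ "\<lambda>xs. g [fa xs, fb xs]"]) (simp add: PR_compose2)
qed

lemma prim_rec2_fst: "prim_rec2 (\<lambda>x y. x)"
  unfolding prim_rec2_def using PR_proj[of 0 2] by force

lemma prim_rec2_snd: "prim_rec2 (\<lambda>x y. y)"
  unfolding prim_rec2_def using PR_proj[of 1 2] by force

lemma prim_rec2_const: "prim_rec2 (\<lambda>x y. c)"
  unfolding prim_rec2_def using PR_const by blast

lemma prim_rec2_ignore_fst:
  assumes "prim_rec1 h"
  shows "prim_rec2 (\<lambda>x y. h y)"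
proof -
  obtain f where f: "PR 1 f" "\<forall>x. h x = f [x]"
    using assms unfolding prim_rec1_def by blast
  have "PR 2 (\<lambda>xs. f [xs ! 1])"
    by (rule PR_compose1[OF f(1) PR_proj]) simp
  then show ?thesis
    unfolding prim_rec2_def using f(2) by (intro exI[of _ "\<lambda>xs. f [xs ! 1]"]) simp
qed

lemma prim_rec2_add: "prim_rec2 (+)"
proof -
  define step :: "nat list \<Rightarrow> nat" where "step xs = Suc (hd [xs ! 1])" for xs
  have "PR 3 step"
    unfolding step_def by (rule PR_compose1[OF PR_succ PR_proj]) simp
  then have "PR 2 (\<lambda>xs. prim_rec_op (\<lambda>xs. xs ! 0) step (hd xs) (tl xs))"
    using PR_rec[of 1 "\<lambda>xs. xs ! 0" step] PR_proj[of 0 1] by (simp add: numeral_eq_Suc)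
  moreover have "prim_rec_op (\<lambda>xs. xs ! 0) step x [y] = x + y" for x y
    by (induction x) (simp_all add: step_def)
  ultimately show ?thesis
    unfolding prim_rec2_def
    by (intro exI[of _ "\<lambda>xs. prim_rec_op (\<lambda>xs. xs ! 0) step (hd xs) (tl xs)"]) simp
qed

lemma prim_rec1_recursion:
  assumes "prim_rec2 H" "\<And>x. f (Suc x) = H x (f x)"
  shows "prim_rec1 f"
proof -
  obtain g where g: "PR 2 g" "\<forall>x y. H x y = g [x, y]"
    using assms(1) unfolding prim_rec2_def by blast
  define c where "c = f 0"
  have "PR (Suc (Suc 0)) g"
    using g(1) by (simp add: numeral_2_eq_2)
  from PR_rec[OF PR_const this]
  have "PR 1 (\<lambda>xs. prim_rec_op (\<lambda>_. c) g (hd xs) (tl xs))"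
    by simp
  moreover have "f x = prim_rec_op (\<lambda>_. c) g x []" for x
    by (induction x) (simp_all add: assms(2) g(2) c_def)
  ultimately show ?thesis
    unfolding prim_rec1_def by (intro exI[of _ "\<lambda>xs. prim_rec_op (\<lambda>_. c) g (hd xs) (tl xs)"]) simp
qed

lemma prim_rec1_triangular: "prim_rec1 (\<lambda>m. \<Sum>i<m. i)"
  by (rule prim_rec1_recursion[OF prim_rec2_compose[OF prim_rec2_add prim_rec2_snd prim_rec2_fst]])
    simp

lemma prim_rec1_code_replicate: "prim_rec1 (\<lambda>n. code_string (replicate n b))"
  by (rule prim_rec1_recursion[OF prim_rec2_compose[OF prim_rec2_add
        prim_rec2_compose[OF prim_rec2_add prim_rec2_snd prim_rec2_snd] prim_rec2_const,
        of "if b then 1 else 0"]])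
    (simp add: code_string_def)

lemma bij_betw_shift_atLeast: "bij_betw (\<lambda>k. k - m) {m::nat..} UNIV"
  by (rule bij_betw_byWitness[where f' = "\<lambda>k. k + m"]) auto

lemma bij_extending_inj_prefix:
  fixes m :: nat
  assumes "countable V" "infinite V" "inj_on e {..<m}" "e ` {..<m} \<subseteq> V"
  obtains f where "bij_betw f UNIV V" "\<forall>k<m. f k = e k"
proof -
  define R where "R = V - e ` {..<m}"
  have "infinite R"
    unfolding R_def using assms(2) by (simp add: Diff_infinite_finite)
  then have "bij_betw (from_nat_into R) UNIV R"
    using assms(1) by (intro bij_betw_from_nat_into) (simp_all add: R_def)
  then have "bij_betw (\<lambda>k. from_nat_into R (k - m)) {m..} R"
    using bij_betw_trans[OF bij_betw_shift_atLeast] by (auto simp: comp_def)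
  with inj_on_imp_bij_betw[OF assms(3)]
  have "bij_betw (\<lambda>k. if k \<in> {..<m} then e k else from_nat_into R (k - m))
      ({..<m} \<union> {m..}) (e ` {..<m} \<union> R)"
    by (rule bij_betw_disjoint_Un) (auto simp: R_def)
  moreover have "{..<m} \<union> {m..} = UNIV" "e ` {..<m} \<union> R = V" using assms(4) by (auto simp: R_def)
  ultimately show thesis by (intro that) auto
qed

lemma infinite_homogeneous_subset:
  assumes "is_graph V E" "infinite V"
  obtains Y b where "Y \<subseteq> V" "infinite Y" "\<forall>x\<in>Y. \<forall>y\<in>Y. x \<noteq> y \<longrightarrow> E x y = b"
proof -
  define colour where "colour X = (if \<exists>x\<in>X. \<exists>y\<in>X. E x y then 1 else 0 :: nat)" for X
  have edge_colour: "colour {x, y} = (if E x y then 1 else 0)" if "x \<in> V" "y \<in> V" for x y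
  proof -
    have "\<not> E x x" "\<not> E y y" "E y x \<longleftrightarrow> E x y"
      using assms(1) that unfolding is_graph_def by blast+
    then show ?thesis unfolding colour_def by auto
  qed
  have "\<forall>x\<in>V. \<forall>y\<in>V. x \<noteq> y \<longrightarrow> colour {x, y} < 2"
    by (simp add: colour_def)
  from Ramsey2[OF assms(2) this] obtain Y t where Y: "Y \<subseteq> V" "infinite Y"
    and homogeneous: "\<forall>x\<in>Y. \<forall>y\<in>Y. x \<noteq> y \<longrightarrow> colour {x, y} = t"
    by blast
  have "E x y = (t = 1)" if "x \<in> Y" "y \<in> Y" "x \<noteq> y" for x y
  proof -
    have "x \<in> V" "y \<in> V"
      using that Y(1) by auto
    moreover from homogeneous that have "colour {x, y} = t"
      by blast
    ultimately show ?thesis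
      using edge_colour by (auto split: if_splits)
  qed
  with Y show thesis
    by (intro that[of Y "t = 1"]) auto
qed

lemma presentation_pullback:
  assumes "is_graph V E" "bij_betw f UNIV V"
  shows "presentation (\<lambda>i j. E (f i) (f j)) V E"
  using assms unfolding presentation_def is_graph_def bij_betw_def by auto

lemma restr_string_cong:
  assumes "\<And>i j. j < i \<Longrightarrow> i < m \<Longrightarrow> \<alpha> i j = \<beta> i j"
  shows "restr_string \<alpha> m = restr_string \<beta> m"
  unfolding restr_string_def using assms by (intro arg_cong[where f = concat] map_cong) auto

lemma restr_string_const: "restr_string (\<lambda>_ _. b) m = replicate (\<Sum>i<m. i) b"
  by (induction m) (simp_all add: restr_string_def replicate_add map_replicate_const)

lemma presentations_with_constant_prefix:
  assumes "is_graph V E" "countable V" "infinite V"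
  obtains b where "\<And>m. \<exists>\<alpha>. presentation \<alpha> V E \<and> restr_string \<alpha> m = replicate (\<Sum>i<m. i) b"
proof -
  obtain Y b where Y: "Y \<subseteq> V" "infinite Y" and hom: "\<forall>x\<in>Y. \<forall>y\<in>Y. x \<noteq> y \<longrightarrow> E x y = b"
    using infinite_homogeneous_subset[OF assms(1,3)] .
  define e where "e = from_nat_into Y"
  have e: "bij_betw e UNIV Y"
    unfolding e_def using Y countable_subset[OF Y(1) assms(2)] by (intro bij_betw_from_nat_into)
  have "\<exists>\<alpha>. presentation \<alpha> V E \<and> restr_string \<alpha> m = replicate (\<Sum>i<m. i) b" for m
  proof -
    obtain f where f: "bij_betw f UNIV V" "\<forall>k<m. f k = e k"
    proof (rule bij_extending_inj_prefix[OF assms(2,3)])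
      show "inj_on e {..<m}" using e by (auto simp: bij_betw_def intro: inj_on_subset)
      show "e ` {..<m} \<subseteq> V" using e Y(1) by (auto simp: bij_betw_def)
    qed
    have "restr_string (\<lambda>i j. E (f i) (f j)) m = restr_string (\<lambda>_ _. b) m"
    proof (rule restr_string_cong)
      fix i j assume "j < i" "i < m"
      then show "E (f i) (f j) = b"
        using f(2) hom e by (auto simp: bij_betw_def inj_eq)
    qed
    then show ?thesis
      using presentation_pullback[OF assms(1) f(1)] restr_string_const by metis
  qed
  then show thesis by (rule that)
qed

theorem mainTheorem2:
  fixes V :: "'a set" and E :: "'a \<Rightarrow> 'a \<Rightarrow> bool" and h :: "nat \<Rightarrow> nat"
  assumes "is_graph V E" and "countable V" and "infinite V"
  shows "online_computable V E h \<longleftrightarrow> prim_rec1 h"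
proof
  assume "online_computable V E h"
  then obtain u F where u: "prim_rec1 u" and F: "prim_rec2 F"
    and online: "\<And>\<alpha> i. presentation \<alpha> V E \<Longrightarrow> h i = F (code_string (restr_string \<alpha> (u i))) i"
    unfolding online_computable_def by blast
  obtain b where b: "\<And>m. \<exists>\<alpha>. presentation \<alpha> V E \<and> restr_string \<alpha> m = replicate (\<Sum>k<m. k) b"
    using presentations_with_constant_prefix[OF assms] by blast
  have "h = (\<lambda>i. F (code_string (replicate (\<Sum>k<u i. k) b)) i)"
  proof
    fix i
    show "h i = F (code_string (replicate (\<Sum>k<u i. k) b)) i"
      using b[of "u i"] online by metis
  qed
  moreover have "prim_rec1 (\<lambda>i. F (code_string (replicate (\<Sum>k<u i. k) b)) i)"
    using prim_rec1_compose2[OF F prim_rec1_compose[OF prim_rec1_code_replicate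
          prim_rec1_compose[OF prim_rec1_triangular u]] prim_rec1_id] .
  ultimately show "prim_rec1 h"
    by simp
next
  assume "prim_rec1 h"
  then show "online_computable V E h"
    unfolding online_computable_def using prim_rec1_const[of 0] prim_rec2_ignore_fst by blast
qed

end
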